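(* Let $G$ be a finite multigraph (no loops), let $\ell \geq 4$ be an integer, let $s$ be a vertex of $G$, and let $A \subsetneq V(G)$ with $s \notin A$ be such that $\lambda_G(x,y) \geq \ell$ for any two distinct $x,y\in A$ and such that no edge of $G$ has both endvertices outside $A$. Assume $\deg(s) \geq 4$, let $I_1$ and $I_2$ be two distinct maximal independent sets in $L(G,s,\tau_A)$, each of size at least $2$, and let $D_1, D_2$ be dangerous sets such that for $i=1,2$ and every edge $sv \in I_i$ we have $v \in D_i$. Then: (1) $|I_1 \cap I_2| \leq 1$; (2) if $|I_1 \cap I_2| = 1$ and $I_1 \cup I_2 \neq V(L(G,s,\tau_A))$, then $\ell$ is odd.
   Context: $\lambda_G(x,y)$ is the maximum number of pairwise edge-disjoint $x$–$y$ paths in $G$; $\delta_G(X)$ is the set of edges with exactly one endvertex in $X$. Lifting two distinct edges $sx,sy$ means deleting them and adding a new edge $xy$. The target function $\tau_A$ assigns $\ell$ to pairs of vertices both in $A$ and $0$ otherwise; a pair of edges at $s$ is $\tau_A$-admissible if after lifting them the new graph $G'$ satisfies $\lambda_{G'}(x,y)\ge\tau_A(x,y)$ for all distinct $x,y\in V(G)\setminus\{s\}$. The lifting graph $L(G,s,\tau_A)$ has as vertices the edges incident with $s$, two being adjacent iff they form a $\tau_A$-admissible pair. A set $D\subseteq V(G)\setminus\{s\}$ is dangerous if both $D$ and $V(G)\setminus(D\cup\{s\})$ contain vertices of $A$ and $|\delta_G(D)|\le \ell+1$. *)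

theory Defs
  imports Main
begin

definition multigraph :: "'v set \<Rightarrow> 'e set \<Rightarrow> ('e \<Rightarrow> 'v set) \<Rightarrow> bool" where
  "multigraph V E ends \<longleftrightarrow> finite V \<and> finite E \<and>
     (\<forall>e\<in>E. ends e \<subseteq> V \<and> card (ends e) = 2)"

definition is_path :: "('e \<Rightarrow> 'v set) \<Rightarrow> 'e set \<Rightarrow> 'v \<Rightarrow> 'v \<Rightarrow> 'e list \<Rightarrow> bool" where
  "is_path ends E x y es \<longleftrightarrow>
     (\<exists>ws. length ws = Suc (length es) \<and> distinct ws \<and> hd ws = x \<and> last ws = y \<and>
        (\<forall>i<length es. es ! i \<in> E \<and> ends (es ! i) = {ws ! i, ws ! Suc i}))"

definition local_conn :: "('e \<Rightarrow> 'v set) \<Rightarrow> 'e set \<Rightarrow> 'v \<Rightarrow> 'v \<Rightarrow> nat" where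
  "local_conn ends E x y = Sup {card P | P. finite P \<and> (\<forall>p\<in>P. is_path ends E x y p) \<and>
        (\<forall>p\<in>P. \<forall>q\<in>P. p \<noteq> q \<longrightarrow> set p \<inter> set q = {})}"

definition cut :: "('e \<Rightarrow> 'v set) \<Rightarrow> 'e set \<Rightarrow> 'v set \<Rightarrow> 'e set" where
  "cut ends E X = {e \<in> E. card (ends e \<inter> X) = 1}"

definition incident :: "('e \<Rightarrow> 'v set) \<Rightarrow> 'e set \<Rightarrow> 'v \<Rightarrow> 'e set" where
  "incident ends E s = {e \<in> E. s \<in> ends e}"

definition degree :: "('e \<Rightarrow> 'v set) \<Rightarrow> 'e set \<Rightarrow> 'v \<Rightarrow> nat" where
  "degree ends E s = card (incident ends E s)"

definition other_end :: "('e \<Rightarrow> 'v set) \<Rightarrow> 'v \<Rightarrow> 'e \<Rightarrow> 'v" where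
  "other_end ends s e = the_elem (ends e - {s})"

text \<open>Lifting e1 = sx, e2 = sy: the new graph has edges Some e for the old edges
other than e1, e2, and the new edge None joining x and y.\<close>
definition lift_edges :: "'e set \<Rightarrow> 'e \<Rightarrow> 'e \<Rightarrow> 'e option set" where
  "lift_edges E e1 e2 = Some ` (E - {e1, e2}) \<union> {None}"

definition lift_ends :: "('e \<Rightarrow> 'v set) \<Rightarrow> 'v \<Rightarrow> 'e \<Rightarrow> 'e \<Rightarrow> 'e option \<Rightarrow> 'v set" where
  "lift_ends ends s e1 e2 eo =
     (case eo of None \<Rightarrow> {other_end ends s e1, other_end ends s e2} | Some e \<Rightarrow> ends e)"

definition tau :: "'v set \<Rightarrow> nat \<Rightarrow> 'v \<Rightarrow> 'v \<Rightarrow> nat" where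
  "tau A l x y = (if x \<in> A \<and> y \<in> A then l else 0)"

definition admissible ::
  "'v set \<Rightarrow> 'e set \<Rightarrow> ('e \<Rightarrow> 'v set) \<Rightarrow> 'v \<Rightarrow> 'v set \<Rightarrow> nat \<Rightarrow> 'e \<Rightarrow> 'e \<Rightarrow> bool" where
  "admissible V E ends s A l e1 e2 \<longleftrightarrow>
     e1 \<in> incident ends E s \<and> e2 \<in> incident ends E s \<and> e1 \<noteq> e2 \<and>
     (\<forall>x\<in>V - {s}. \<forall>y\<in>V - {s}. x \<noteq> y \<longrightarrow>
        local_conn (lift_ends ends s e1 e2) (lift_edges E e1 e2) x y \<ge> tau A l x y)"

text \<open>Independent sets of the lifting graph L(G,s,tau_A), whose vertex set is
incident ends E s and whose adjacency is admissibility.\<close>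
definition indep_L ::
  "'v set \<Rightarrow> 'e set \<Rightarrow> ('e \<Rightarrow> 'v set) \<Rightarrow> 'v \<Rightarrow> 'v set \<Rightarrow> nat \<Rightarrow> 'e set \<Rightarrow> bool" where
  "indep_L V E ends s A l I \<longleftrightarrow> I \<subseteq> incident ends E s \<and>
     (\<forall>e1\<in>I. \<forall>e2\<in>I. \<not> admissible V E ends s A l e1 e2)"

definition max_indep_L ::
  "'v set \<Rightarrow> 'e set \<Rightarrow> ('e \<Rightarrow> 'v set) \<Rightarrow> 'v \<Rightarrow> 'v set \<Rightarrow> nat \<Rightarrow> 'e set \<Rightarrow> bool" where
  "max_indep_L V E ends s A l I \<longleftrightarrow> indep_L V E ends s A l I \<and>
     (\<forall>J. indep_L V E ends s A l J \<and> I \<subseteq> J \<longrightarrow> J = I)"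

definition dangerous ::
  "'v set \<Rightarrow> 'e set \<Rightarrow> ('e \<Rightarrow> 'v set) \<Rightarrow> 'v \<Rightarrow> 'v set \<Rightarrow> nat \<Rightarrow> 'v set \<Rightarrow> bool" where
  "dangerous V E ends s A l D \<longleftrightarrow> D \<subseteq> V - {s} \<and> D \<inter> A \<noteq> {} \<and>
     (V - (D \<union> {s})) \<inter> A \<noteq> {} \<and> card (cut ends E D) \<le> l + 1"

end

theory Submission
  imports Defs
begin

text \<open>Choose g \<in> I1 - I2; by maximality of I2 it forms an admissible pair with some h \<in> I2. If
both other ends of an admissible pair lay in a dangerous set D, lifting the pair would remove two
of the at most l + 1 edges leaving D, although D still separates two vertices of A and so needs l
of them. Hence the ends of g and h lie in D1 - D2 and D2 - D1, while every edge of I1 \<inter> I2 ends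
in D1 \<inter> D2. Writing d(X) for the number of edges leaving X, posimodularity
d(D1 - D2) + d(D2 - D1) + 2|I1 \<inter> I2| \<le> d(D1) + d(D2) \<le> 2l + 2
with both terms on the left at least l, gives (1) and, if |I1 \<inter> I2| = 1, forces d(D1 - D2) = l
and d(D1) = l + 1. An edge outside I1 \<union> I2 ends outside D1 \<union> D2; by parity d(D1 \<inter> D2) is then
odd and at least l, so for even l submodularity makes D1 \<union> D2 dangerous, although it contains
the ends of g and h.\<close>

lemma multigraph_edge_doubleton:
  assumes "multigraph V E ends" "e \<in> E"
  obtains a b where "a \<noteq> b" "ends e = {a, b}"
  using assms unfolding multigraph_def card_2_iff by blast

lemma multigraph_incident_ends:
  assumes G: "multigraph V E ends" and e: "e \<in> incident ends E s"
  shows "e \<in> E" "ends e = {s, other_end ends s e}" "other_end ends s e \<noteq> s"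
    "other_end ends s e \<in> V"
proof -
  have eE: "e \<in> E" "s \<in> ends e" using e unfolding incident_def by auto
  obtain u where u: "ends e = {s, u}" "u \<noteq> s"
  proof -
    obtain a b where "a \<noteq> b" "ends e = {a, b}" using multigraph_edge_doubleton[OF G eE(1)] .
    then show thesis using eE(2) that[of b] that[of a] by (auto simp: insert_commute)
  qed
  then have "ends e - {s} = {u}" by auto
  then have "other_end ends s e = u" unfolding other_end_def by simp
  moreover have "ends e \<subseteq> V" using G eE unfolding multigraph_def by blast
  ultimately show "e \<in> E" "ends e = {s, other_end ends s e}" "other_end ends s e \<noteq> s"
    "other_end ends s e \<in> V" using eE u by auto
qed

subsection \<open>Paths cross every edge cut\<close>

text \<open>Unlike cut, this excludes loops: lifting two parallel edges sx, sx creates a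
loop at x, which lies in the cut of {x} but on no path.\<close>
definition crossing_edges :: "('e \<Rightarrow> 'v set) \<Rightarrow> 'e set \<Rightarrow> 'v set \<Rightarrow> 'e set" where
  "crossing_edges ends E X = {e \<in> E. \<exists>a\<in>X. \<exists>b. b \<notin> X \<and> ends e = {a, b}}"

lemma crossing_edges_subset_cut: "crossing_edges ends E X \<subseteq> cut ends E X"
  unfolding crossing_edges_def cut_def by (auto simp: Int_insert_left)

lemma exists_exit_index:
  fixes P :: "nat \<Rightarrow> bool"
  assumes "P 0" "\<not> P n"
  shows "\<exists>i<n. P i \<and> \<not> P (Suc i)"
  using assms(2) by (induction n) (use assms(1) in \<open>auto intro: less_SucI\<close>)

lemma is_path_meets_crossing_edges:
  assumes "is_path ends E x y p" "x \<in> X" "y \<notin> X"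
  shows "\<exists>e\<in>set p. e \<in> crossing_edges ends E X"
proof -
  obtain ws where ws: "length ws = Suc (length p)" "hd ws = x" "last ws = y"
    "\<forall>i<length p. p ! i \<in> E \<and> ends (p ! i) = {ws ! i, ws ! Suc i}"
    using assms(1) unfolding is_path_def by blast
  have "ws \<noteq> []" using ws(1) by auto
  then have "ws ! 0 \<in> X" "ws ! length p \<notin> X"
    using ws assms(2,3) by (auto simp: hd_conv_nth last_conv_nth)
  then obtain i where "i < length p" "ws ! i \<in> X" "ws ! Suc i \<notin> X"
    using exists_exit_index[of "\<lambda>i. ws ! i \<in> X"] by blast
  then show ?thesis using ws(4) unfolding crossing_edges_def by force
qed

lemma local_conn_le_card_crossing_edges:
  assumes fin: "finite E" and X: "x \<in> X" "y \<notin> X"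
  shows "local_conn ends E x y \<le> card (crossing_edges ends E X)"
  unfolding local_conn_def
proof (rule cSup_least)
  let ?fams = "{card P |P. finite P \<and> (\<forall>p\<in>P. is_path ends E x y p) \<and>
        (\<forall>p\<in>P. \<forall>q\<in>P. p \<noteq> q \<longrightarrow> set p \<inter> set q = {})}"
  have "card {} \<in> ?fams" by (intro CollectI exI[of _ "{}"]) simp
  then show "?fams \<noteq> {}" by blast
  fix n assume "n \<in> ?fams"
  then obtain P where n: "n = card P" and paths: "\<forall>p\<in>P. is_path ends E x y p"
    and disjoint: "\<forall>p\<in>P. \<forall>q\<in>P. p \<noteq> q \<longrightarrow> set p \<inter> set q = {}"
    by blast
  have "\<forall>p\<in>P. \<exists>e. e \<in> set p \<and> e \<in> crossing_edges ends E X"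
    using is_path_meets_crossing_edges[OF _ X] paths by blast
  then have "\<exists>f. \<forall>p\<in>P. f p \<in> set p \<and> f p \<in> crossing_edges ends E X" by (rule bchoice)
  then obtain f where f: "\<forall>p\<in>P. f p \<in> set p \<and> f p \<in> crossing_edges ends E X" by blast
  have "inj_on f P"
  proof (rule inj_onI)
    fix p q assume "p \<in> P" "q \<in> P" "f p = f q"
    then have "f p \<in> set p \<inter> set q" using f by auto
    then show "p = q" using disjoint \<open>p \<in> P\<close> \<open>q \<in> P\<close> by blast
  qed
  moreover have "f ` P \<subseteq> crossing_edges ends E X" using f by blast
  moreover have "finite (crossing_edges ends E X)" using fin unfolding crossing_edges_def by simp
  ultimately show "n \<le> card (crossing_edges ends E X)" unfolding n by (rule card_inj_on_le)
qed

lemma local_conn_le_card_cut: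
  assumes "finite E" "x \<in> X" "y \<notin> X"
  shows "local_conn ends E x y \<le> card (cut ends E X)"
proof -
  have fin: "finite (cut ends E X)" using assms(1) unfolding cut_def by simp
  have "local_conn ends E x y \<le> card (crossing_edges ends E X)"
    using assms by (rule local_conn_le_card_crossing_edges)
  also have "\<dots> \<le> card (cut ends E X)"
    using fin crossing_edges_subset_cut by (rule card_mono)
  finally show ?thesis .
qed

subsection \<open>Counting cut edges\<close>

definition cut_indicator :: "('e \<Rightarrow> 'v set) \<Rightarrow> 'v set \<Rightarrow> 'e \<Rightarrow> nat" where
  "cut_indicator ends X e = of_bool (card (ends e \<inter> X) = 1)"

lemma card_cut_eq_sum:
  "finite E \<Longrightarrow> card (cut ends E X) = (\<Sum>e\<in>E. cut_indicator ends X e)"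
  unfolding cut_def cut_indicator_def by (simp add: Collect_conj_eq Int_commute)

lemma cut_indicator_doubleton:
  assumes "ends e = {a, b}" "a \<noteq> b"
  shows "cut_indicator ends X e = (if a \<in> X \<longleftrightarrow> b \<in> X then 0 else 1)"
  using assms unfolding cut_indicator_def
  by (cases "a \<in> X"; cases "b \<in> X") (auto simp: Int_insert_left)

lemma card_cut_Int_Un_le:
  assumes G: "multigraph V E ends"
  shows "card (cut ends E (X \<inter> Y)) + card (cut ends E (X \<union> Y))
     \<le> card (cut ends E X) + card (cut ends E Y)"
proof -
  have "(\<Sum>e\<in>E. cut_indicator ends (X \<inter> Y) e + cut_indicator ends (X \<union> Y) e)
     \<le> (\<Sum>e\<in>E. cut_indicator ends X e + cut_indicator ends Y e)"
  proof (rule sum_mono)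
    fix e assume "e \<in> E"
    then obtain a b where "ends e = {a, b}" "a \<noteq> b" using multigraph_edge_doubleton[OF G] by metis
    then show "cut_indicator ends (X \<inter> Y) e + cut_indicator ends (X \<union> Y) e
      \<le> cut_indicator ends X e + cut_indicator ends Y e"
      by (cases "a \<in> X"; cases "a \<in> Y"; cases "b \<in> X"; cases "b \<in> Y")
        (simp_all add: cut_indicator_doubleton)
  qed
  moreover have "finite E" using G unfolding multigraph_def by simp
  ultimately show ?thesis by (simp add: card_cut_eq_sum sum.distrib)
qed

lemma even_card_cut_Un:
  assumes G: "multigraph V E ends" and disj: "X \<inter> Y = {}"
  shows "even (card (cut ends E (X \<union> Y)) + card (cut ends E X) + card (cut ends E Y))"
proof -
  have "even (\<Sum>e\<in>E. cut_indicator ends (X \<union> Y) e + cut_indicator ends X e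
      + cut_indicator ends Y e)"
  proof (rule dvd_sum)
    fix e assume "e \<in> E"
    then obtain a b where "ends e = {a, b}" "a \<noteq> b" using multigraph_edge_doubleton[OF G] by metis
    then show "even (cut_indicator ends (X \<union> Y) e + cut_indicator ends X e
      + cut_indicator ends Y e)"
      using disj by (cases "a \<in> X"; cases "a \<in> Y"; cases "b \<in> X"; cases "b \<in> Y")
        (auto simp: cut_indicator_doubleton)
  qed
  moreover have "finite E" using G unfolding multigraph_def by simp
  ultimately show ?thesis by (simp add: card_cut_eq_sum sum.distrib)
qed

text \<open>Posimodularity of the cut function, sharpened by the edges from an outside vertex s into
X \<inter> Y: each lies in both cuts on the right but in neither cut on the left.\<close>
lemma card_cut_Diff_Diff_le:
  assumes G: "multigraph V E ends" and s: "s \<notin> X" "s \<notin> Y"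
    and F: "F \<subseteq> incident ends E s" "\<forall>e\<in>F. other_end ends s e \<in> X \<inter> Y"
  shows "card (cut ends E (X - Y)) + card (cut ends E (Y - X)) + 2 * card F
    \<le> card (cut ends E X) + card (cut ends E Y)"
proof -
  have fin: "finite E" using G unfolding multigraph_def by simp
  have FE: "F \<subseteq> E" using F(1) unfolding incident_def by blast
  have "(\<Sum>e\<in>E. cut_indicator ends (X - Y) e + cut_indicator ends (Y - X) e + 2 * of_bool (e \<in> F))
    \<le> (\<Sum>e\<in>E. cut_indicator ends X e + cut_indicator ends Y e)"
  proof (rule sum_mono)
    fix e assume "e \<in> E"
    show "cut_indicator ends (X - Y) e + cut_indicator ends (Y - X) e + 2 * of_bool (e \<in> F)
      \<le> cut_indicator ends X e + cut_indicator ends Y e"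
    proof (cases "e \<in> F")
      case True
      then have "ends e = {s, other_end ends s e}" "other_end ends s e \<in> X \<inter> Y"
        using F multigraph_incident_ends[OF G] by blast+
      moreover from this(2) s have "s \<noteq> other_end ends s e" by auto
      ultimately show ?thesis using True s by (simp add: cut_indicator_doubleton)
    next
      case False
      obtain a b where "ends e = {a, b}" "a \<noteq> b"
        using multigraph_edge_doubleton[OF G \<open>e \<in> E\<close>] by metis
      with False show ?thesis
        by (cases "a \<in> X"; cases "a \<in> Y"; cases "b \<in> X"; cases "b \<in> Y")
          (simp_all add: cut_indicator_doubleton)
    qed
  qed
  moreover have "(\<Sum>e\<in>E. 2 * of_bool (e \<in> F)) = 2 * card F"
    using fin FE by (simp add: sum_distrib_left[symmetric] Int_absorb1)
  ultimately show ?thesis using fin by (simp add: card_cut_eq_sum sum.distrib)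
qed

subsection \<open>Admissible lifts and dangerous sets\<close>

lemma admissible_sym:
  "admissible V E ends s A l e1 e2 \<Longrightarrow> admissible V E ends s A l e2 e1"
proof -
  have "lift_edges E e1 e2 = lift_edges E e2 e1"
    "lift_ends ends s e1 e2 = lift_ends ends s e2 e1"
    unfolding lift_edges_def lift_ends_def by (auto simp: insert_commute split: option.split)
  then show "admissible V E ends s A l e1 e2 \<Longrightarrow> admissible V E ends s A l e2 e1"
    unfolding admissible_def by auto
qed

lemma max_indep_L_admissible_partner:
  assumes I: "max_indep_L V E ends s A l I" and k: "k \<in> incident ends E s" "k \<notin> I"
  obtains j where "j \<in> I" "admissible V E ends s A l k j"
proof -
  have indep: "indep_L V E ends s A l I" using I unfolding max_indep_L_def by blast
  have "\<not> indep_L V E ends s A l (insert k I)"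
    using I k(2) unfolding max_indep_L_def by blast
  then obtain e1 e2 where e: "e1 \<in> insert k I" "e2 \<in> insert k I"
    and adm: "admissible V E ends s A l e1 e2"
    using indep k(1) unfolding indep_L_def by blast
  have "e1 \<noteq> e2" using adm unfolding admissible_def by blast
  moreover have "\<not> (e1 \<in> I \<and> e2 \<in> I)" using indep adm unfolding indep_L_def by blast
  ultimately show thesis using e adm admissible_sym[OF adm] that by blast
qed

lemma card_crossing_edges_lift_le:
  assumes G: "multigraph V E ends"
    and e: "e1 \<in> incident ends E s" "e2 \<in> incident ends E s" "e1 \<noteq> e2"
    and X: "s \<notin> X" "other_end ends s e1 \<in> X" "other_end ends s e2 \<in> X"
  shows "card (crossing_edges (lift_ends ends s e1 e2) (lift_edges E e1 e2) X) + 2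
    \<le> card (cut ends E X)"
proof -
  have fin: "finite (cut ends E X)" using G unfolding multigraph_def cut_def by simp
  have cut_e: "{e1, e2} \<subseteq> cut ends E X"
    using X multigraph_incident_ends[OF G e(1)] multigraph_incident_ends[OF G e(2)]
    unfolding cut_def by (auto simp: Int_insert_left)
  have "crossing_edges (lift_ends ends s e1 e2) (lift_edges E e1 e2) X
    \<subseteq> Some ` (cut ends E X - {e1, e2})"
  proof
    fix eo assume "eo \<in> crossing_edges (lift_ends ends s e1 e2) (lift_edges E e1 e2) X"
    then obtain a b where eo: "eo \<in> lift_edges E e1 e2" "lift_ends ends s e1 e2 eo = {a, b}"
      and ab: "a \<in> X" "b \<notin> X"
      unfolding crossing_edges_def by blast
    show "eo \<in> Some ` (cut ends E X - {e1, e2})"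
    proof (cases eo)
      case None
      then have "{a, b} = {other_end ends s e1, other_end ends s e2}"
        using eo(2) unfolding lift_ends_def by simp
      with ab X show ?thesis by auto
    next
      case (Some e)
      then have "e \<in> E - {e1, e2}" "ends e \<inter> X = {a}"
        using eo ab unfolding lift_edges_def lift_ends_def by auto
      with Some show ?thesis unfolding cut_def by auto
    qed
  qed
  then have "card (crossing_edges (lift_ends ends s e1 e2) (lift_edges E e1 e2) X)
    \<le> card (Some ` (cut ends E X - {e1, e2}))"
    using fin by (intro card_mono) auto
  also have "\<dots> = card (cut ends E X - {e1, e2})" by (simp add: card_image)
  also have "\<dots> = card (cut ends E X) - 2"
    using fin cut_e e(3) by (simp add: card_Diff_subset)
  finally show ?thesis using card_mono[OF fin cut_e] e(3) by simp
qed

lemma admissible_not_both_in_dangerous: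
  assumes G: "multigraph V E ends" and adm: "admissible V E ends s A l g h"
    and D: "dangerous V E ends s A l D" and h: "other_end ends s h \<in> D"
  shows "other_end ends s g \<notin> D"
proof
  assume g: "other_end ends s g \<in> D"
  have gh: "g \<in> incident ends E s" "h \<in> incident ends E s" "g \<noteq> h"
    and lift_conn: "\<forall>x\<in>V - {s}. \<forall>y\<in>V - {s}. x \<noteq> y \<longrightarrow>
      tau A l x y \<le> local_conn (lift_ends ends s g h) (lift_edges E g h) x y"
    using adm unfolding admissible_def by blast+
  have D_sub: "D \<subseteq> V - {s}" and D_cut: "card (cut ends E D) \<le> l + 1"
    and "D \<inter> A \<noteq> {}" "(V - (D \<union> {s})) \<inter> A \<noteq> {}"
    using D unfolding dangerous_def by blast+
  then obtain x y where x: "x \<in> D" "x \<in> A" and y: "y \<in> V - {s}" "y \<notin> D" "y \<in> A"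
    by blast
  have lift_fin: "finite (lift_edges E g h)"
    using G unfolding multigraph_def lift_edges_def by simp
  have "x \<in> V - {s}" "x \<noteq> y" using x(1) y(2) D_sub by auto
  then have "tau A l x y \<le> local_conn (lift_ends ends s g h) (lift_edges E g h) x y"
    using lift_conn y(1) by blast
  then have "l \<le> local_conn (lift_ends ends s g h) (lift_edges E g h) x y"
    using x(2) y(3) by (simp add: tau_def)
  also have "\<dots> \<le> card (crossing_edges (lift_ends ends s g h) (lift_edges E g h) D)"
    using lift_fin x(1) y(2) by (rule local_conn_le_card_crossing_edges)
  finally have "l \<le> card (crossing_edges (lift_ends ends s g h) (lift_edges E g h) D)" .
  moreover have "card (crossing_edges (lift_ends ends s g h) (lift_edges E g h) D) + 2
      \<le> card (cut ends E D)"
    using gh D_sub g h by (intro card_crossing_edges_lift_le[OF G]) auto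
  ultimately show False using D_cut by linarith
qed

subsection \<open>Two dangerous sets around an admissible pair\<close>

locale lifting_setting =
  fixes V :: "'v set" and E :: "'e set" and ends :: "'e \<Rightarrow> 'v set"
    and s :: 'v and A :: "'v set" and l :: nat
  assumes multigraph: "multigraph V E ends"
    and s_notin_A: "s \<notin> A"
    and A_connected: "\<forall>x\<in>A. \<forall>y\<in>A. x \<noteq> y \<longrightarrow> local_conn ends E x y \<ge> l"
    and edges_meet_A: "\<forall>e\<in>E. ends e \<inter> A \<noteq> {}"
begin

lemma other_end_in_A: "e \<in> incident ends E s \<Longrightarrow> other_end ends s e \<in> A"
  using multigraph_incident_ends[OF multigraph] edges_meet_A s_notin_A by fastforce

lemma card_cut_ge_if_separates:
  assumes "x \<in> X" "x \<in> A" "y \<notin> X" "y \<in> A"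
  shows "l \<le> card (cut ends E X)"
proof -
  have "finite E" using multigraph unfolding multigraph_def by simp
  have "l \<le> local_conn ends E x y" using A_connected assms by auto
  also have "\<dots> \<le> card (cut ends E X)"
    using \<open>finite E\<close> assms(1,3) by (rule local_conn_le_card_cut)
  finally show ?thesis .
qed

lemma dangerous_overlap_bound:
  assumes D1: "dangerous V E ends s A l D1" and D2: "dangerous V E ends s A l D2"
    and a: "a \<in> (D1 - D2) \<inter> A" and b: "b \<in> (D2 - D1) \<inter> A"
    and F: "F \<subseteq> incident ends E s" "\<forall>e\<in>F. other_end ends s e \<in> D1 \<inter> D2"
  shows "card F \<le> 1"
    and "card F = 1 \<Longrightarrow> card (cut ends E (D1 - D2)) = l \<and> card (cut ends E D1) = l + 1"
proof -
  have "card F \<le> 1 \<and> (card F = 1 \<longrightarrow>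
    card (cut ends E (D1 - D2)) = l \<and> card (cut ends E D1) = l + 1)"
  proof (cases "F = {}")
    case False
    then obtain e where "e \<in> F" by blast
    then have c: "other_end ends s e \<in> D1 \<inter> D2 \<inter> A" using F other_end_in_A by blast
    have sD: "s \<notin> D1" "s \<notin> D2"
      and cuts: "card (cut ends E D1) \<le> l + 1" "card (cut ends E D2) \<le> l + 1"
      using D1 D2 unfolding dangerous_def by auto
    have "l \<le> card (cut ends E (D1 - D2))" "l \<le> card (cut ends E (D2 - D1))"
      using a b c by (auto intro: card_cut_ge_if_separates)
    with card_cut_Diff_Diff_le[OF multigraph sD F] cuts show ?thesis by auto
  qed simp
  then show "card F \<le> 1"
    and "card F = 1 \<Longrightarrow> card (cut ends E (D1 - D2)) = l \<and> card (cut ends E D1) = l + 1"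
    by auto
qed

lemma dangerous_Un_if_even:
  assumes "even l" and D1: "dangerous V E ends s A l D1" and D2: "dangerous V E ends s A l D2"
    and tight: "card (cut ends E (D1 - D2)) = l" "card (cut ends E D1) = l + 1"
    and c: "c \<in> D1 \<inter> D2 \<inter> A" and d: "d \<in> V \<inter> A - (D1 \<union> D2)"
  shows "dangerous V E ends s A l (D1 \<union> D2)"
proof -
  have "(D1 - D2) \<inter> (D1 \<inter> D2) = {}" by blast
  from even_card_cut_Un[OF multigraph this]
  have "even (card (cut ends E D1) + card (cut ends E (D1 - D2)) + card (cut ends E (D1 \<inter> D2)))"
    by (simp only: Un_Diff_Int)
  then have "card (cut ends E (D1 \<inter> D2)) \<noteq> l" using tight \<open>even l\<close> by auto
  moreover have "l \<le> card (cut ends E (D1 \<inter> D2))"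
    using c d by (auto intro: card_cut_ge_if_separates)
  moreover have "card (cut ends E D2) \<le> l + 1" using D2 unfolding dangerous_def by blast
  ultimately have "card (cut ends E (D1 \<union> D2)) \<le> l + 1"
    using card_cut_Int_Un_le[OF multigraph, of D1 D2] tight by linarith
  moreover have "D1 \<union> D2 \<subseteq> V - {s}" using D1 D2 unfolding dangerous_def by blast
  moreover have "c \<in> (D1 \<union> D2) \<inter> A" "d \<in> (V - (D1 \<union> D2 \<union> {s})) \<inter> A"
    using c d s_notin_A by auto
  ultimately show ?thesis unfolding dangerous_def by blast
qed

end

locale dangerous_covers = lifting_setting +
  fixes I1 I2 :: "'e set" and D1 D2 :: "'v set"
  assumes I1: "max_indep_L V E ends s A l I1" and I2: "max_indep_L V E ends s A l I2"
    and I1_neq_I2: "I1 \<noteq> I2"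
    and D1: "dangerous V E ends s A l D1" and D2: "dangerous V E ends s A l D2"
    and I1_ends: "\<forall>e\<in>I1. other_end ends s e \<in> D1"
    and I2_ends: "\<forall>e\<in>I2. other_end ends s e \<in> D2"
begin

lemma I_subset_incident: "I1 \<subseteq> incident ends E s" "I2 \<subseteq> incident ends E s"
  using I1 I2 unfolding max_indep_L_def indep_L_def by auto

lemma crossing_admissible_pair:
  obtains g h where "admissible V E ends s A l g h"
    "other_end ends s g \<in> (D1 - D2) \<inter> A" "other_end ends s h \<in> (D2 - D1) \<inter> A"
proof -
  obtain g where g: "g \<in> I1" "g \<notin> I2" using I1 I2 I1_neq_I2 unfolding max_indep_L_def by blast
  then obtain h where h: "h \<in> I2" and gh: "admissible V E ends s A l g h"
    using max_indep_L_admissible_partner[OF I2] I_subset_incident by blast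
  have "other_end ends s g \<notin> D2"
    using admissible_not_both_in_dangerous[OF multigraph gh D2] I2_ends h by blast
  moreover have "other_end ends s h \<notin> D1"
    using admissible_not_both_in_dangerous[OF multigraph admissible_sym[OF gh] D1] I1_ends g(1)
    by blast
  ultimately show thesis
    using that[OF gh] I1_ends I2_ends g(1) h I_subset_incident other_end_in_A by blast
qed

lemma card_shared_le_1: "card (I1 \<inter> I2) \<le> 1"
  and card_shared_eq_1_tight: "card (I1 \<inter> I2) = 1 \<Longrightarrow>
    card (cut ends E (D1 - D2)) = l \<and> card (cut ends E D1) = l + 1"
proof -
  obtain g h where "other_end ends s g \<in> (D1 - D2) \<inter> A" "other_end ends s h \<in> (D2 - D1) \<inter> A"
    by (rule crossing_admissible_pair)
  moreover have "I1 \<inter> I2 \<subseteq> incident ends E s" "\<forall>e\<in>I1 \<inter> I2. other_end ends s e \<in> D1 \<inter> D2"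
    using I_subset_incident I1_ends I2_ends by auto
  ultimately show "card (I1 \<inter> I2) \<le> 1" and "card (I1 \<inter> I2) = 1 \<Longrightarrow>
      card (cut ends E (D1 - D2)) = l \<and> card (cut ends E D1) = l + 1"
    using dangerous_overlap_bound[OF D1 D2] by blast+
qed

lemma odd_if_one_shared_and_uncovered:
  assumes one: "card (I1 \<inter> I2) = 1" and uncovered: "I1 \<union> I2 \<noteq> incident ends E s"
  shows "odd l"
proof (rule ccontr)
  assume "\<not> odd l"
  obtain e where e: "I1 \<inter> I2 = {e}" using one card_1_singletonE by blast
  have "I1 \<union> I2 \<subset> incident ends E s" using uncovered I_subset_incident by blast
  then obtain k where k: "k \<in> incident ends E s" "k \<notin> I1" "k \<notin> I2"
    by (blast dest: psubset_imp_ex_mem)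
  obtain j1 where j1: "j1 \<in> I1" and kj1: "admissible V E ends s A l k j1"
    using max_indep_L_admissible_partner[OF I1 k(1,2)] .
  obtain j2 where j2: "j2 \<in> I2" and kj2: "admissible V E ends s A l k j2"
    using max_indep_L_admissible_partner[OF I2 k(1,3)] .
  have "other_end ends s k \<notin> D1" "other_end ends s k \<notin> D2"
    using admissible_not_both_in_dangerous[OF multigraph kj1 D1]
      admissible_not_both_in_dangerous[OF multigraph kj2 D2] I1_ends I2_ends j1 j2 by blast+
  then have d: "other_end ends s k \<in> V \<inter> A - (D1 \<union> D2)"
    using multigraph_incident_ends(4)[OF multigraph k(1)] other_end_in_A[OF k(1)] by blast
  have c: "other_end ends s e \<in> D1 \<inter> D2 \<inter> A"
    using e I1_ends I2_ends I_subset_incident other_end_in_A by blast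
  have "dangerous V E ends s A l (D1 \<union> D2)"
    using card_shared_eq_1_tight[OF one] \<open>\<not> odd l\<close>
    by (intro dangerous_Un_if_even[OF _ D1 D2 _ _ c d]) auto
  moreover obtain g h where "admissible V E ends s A l g h"
    "other_end ends s g \<in> (D1 - D2) \<inter> A" "other_end ends s h \<in> (D2 - D1) \<inter> A"
    by (rule crossing_admissible_pair)
  ultimately show False using admissible_not_both_in_dangerous[OF multigraph] by blast
qed

end

theorem proposition4p6:
  fixes V :: "'v set" and E :: "'e set" and ends :: "'e \<Rightarrow> 'v set"
    and s :: 'v and A :: "'v set" and l :: nat
    and I1 I2 :: "'e set" and D1 D2 :: "'v set"
  assumes G: "multigraph V E ends"
    and l4: "l \<ge> 4"
    and sV: "s \<in> V"
    and AV: "A \<subset> V" and sA: "s \<notin> A"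
    and Aconn: "\<forall>x\<in>A. \<forall>y\<in>A. x \<noteq> y \<longrightarrow> local_conn ends E x y \<ge> l"
    and noout: "\<forall>e\<in>E. ends e \<inter> A \<noteq> {}"
    and deg: "degree ends E s \<ge> 4"
    and I1: "max_indep_L V E ends s A l I1" and I1c: "card I1 \<ge> 2"
    and I2: "max_indep_L V E ends s A l I2" and I2c: "card I2 \<ge> 2"
    and I12: "I1 \<noteq> I2"
    and D1: "dangerous V E ends s A l D1" and D2: "dangerous V E ends s A l D2"
    and D1I: "\<forall>e\<in>I1. other_end ends s e \<in> D1"
    and D2I: "\<forall>e\<in>I2. other_end ends s e \<in> D2"
  shows "card (I1 \<inter> I2) \<le> 1 \<and>
    (card (I1 \<inter> I2) = 1 \<and> I1 \<union> I2 \<noteq> incident ends E s \<longrightarrow> odd l)"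
proof -
  interpret dangerous_covers V E ends s A l I1 I2 D1 D2
    by unfold_locales (fact G sA Aconn noout I1 I2 I12 D1 D2 D1I D2I)+
  show ?thesis using card_shared_le_1 odd_if_one_shared_and_uncovered by blast
qed

end
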